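(* Let $n \geq 2$ and $a > 0$, and let $F_\pm = (\pm a, 0, \ldots, 0) \in \mathbb{R}^n$. Put $d_{\min} = 2a$. For $d > d_{\min}$ let $$E(d) = \{x \in \mathbb{R}^n : \|x - F_+\|_2 + \|x - F_-\|_2 \leq d\},$$ the solid prolate hyperspheroid with foci $F_\pm$ and transverse diameter $d$. Let $X$ be a random point drawn from the uniform distribution on $E(d_i)$, where $d_i > d_{\min}$ is fixed. Let $d_{i+1} = \|X - F_+\|_2 + \|X - F_-\|_2$ be the transverse diameter of the prolate hyperspheroid with the same foci on whose surface $X$ lies. Then $$\mathbb{E}[d_{i+1}] = \frac{n\, d_i^2 + d_{\min}^2}{(n+1)\, d_i}.$$
   Context: The transverse diameter of a prolate hyperspheroid with foci $F_\pm$ is the length of its major axis. It equals $\|x-F_+\|_2+\|x-F_-\|_2$ for any point $x$ on its surface. The volume of $E(d)$ is $\zeta_n\, d\,(d^2-d_{\min}^2)^{(n-1)/2}/2^n$, where $\zeta_n$ is the volume of the unit $n$-ball. *)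

theory Defs
  imports "HOL-Analysis.Analysis" "HOL-Probability.Probability"
begin

definition focus_plus :: "real \<Rightarrow> 'n::finite \<Rightarrow> real^'n" where
  "focus_plus a k = (\<chi> i. if i = k then a else 0)"

definition focus_minus :: "real \<Rightarrow> 'n::finite \<Rightarrow> real^'n" where
  "focus_minus a k = (\<chi> i. if i = k then - a else 0)"

definition transverse_diam :: "real \<Rightarrow> 'n::finite \<Rightarrow> real^'n \<Rightarrow> real" where
  "transverse_diam a k x = norm (x - focus_plus a k) + norm (x - focus_minus a k)"

definition hyperspheroid :: "real \<Rightarrow> 'n::finite \<Rightarrow> real \<Rightarrow> (real^'n) set" where
  "hyperspheroid a k d = {x. transverse_diam a k x \<le> d}"

end

theory Submission
  imports Defs
begin

text \<open>By the layer-cake formula the expected transverse diameter is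
  \<open>\<integral>\<^sub>0\<^sup>d P(d\<^sub>i\<^sub>+\<^sub>1 > t) dt = \<integral>\<^sub>0\<^sup>d (1 - vol E(t) / vol E(d)) dt\<close>, where \<open>d = d\<^sub>i\<close>.
  In coordinates adapted to the foci, \<open>E(t)\<close> is the unit ball stretched by the semi-axes \<open>t/2\<close>
  (once) and \<open>sqrt (t\<^sup>2 - d\<^sub>m\<^sub>i\<^sub>n\<^sup>2)/2\<close> (\<open>n - 1\<close> times), so \<open>vol E(t)\<close> is a constant times
  \<open>t (t\<^sup>2 - d\<^sub>m\<^sub>i\<^sub>n\<^sup>2)\<^bsup>(n-1)/2\<^esup>\<close>, whose antiderivative is \<open>(t\<^sup>2 - d\<^sub>m\<^sub>i\<^sub>n\<^sup>2)\<^bsup>(n+1)/2\<^esup> / (n+1)\<close>.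
  The integral is then \<open>d - (d\<^sup>2 - d\<^sub>m\<^sub>i\<^sub>n\<^sup>2) / ((n+1) d)\<close>.\<close>

lemma nn_integral_layer_cake:
  fixes f :: "'a \<Rightarrow> real"
  assumes "sigma_finite_measure M" and f [measurable]: "f \<in> borel_measurable M"
    and nonneg: "\<And>x. x \<in> space M \<Longrightarrow> 0 \<le> f x"
  shows "(\<integral>\<^sup>+x. ennreal (f x) \<partial>M) = (\<integral>\<^sup>+t\<in>{0..}. emeasure M {x \<in> space M. t < f x} \<partial>lborel)"
proof -
  interpret pair_sigma_finite M lborel
    by (intro pair_sigma_finite.intro assms(1) lborel.sigma_finite_measure_axioms)
  define g :: "'a \<Rightarrow> real \<Rightarrow> ennreal" where "g x t = indicator {t. 0 \<le> t \<and> t < f x} t" for x t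
  have "(\<integral>\<^sup>+x. ennreal (f x) \<partial>M) = (\<integral>\<^sup>+x. \<integral>\<^sup>+t. g x t \<partial>lborel \<partial>M)"
  proof (rule nn_integral_cong)
    fix x assume "x \<in> space M"
    show "ennreal (f x) = (\<integral>\<^sup>+t. g x t \<partial>lborel)"
    proof -
      have "{t. 0 \<le> t \<and> t < f x} = {0..<f x}" by auto
      then show ?thesis using nonneg \<open>x \<in> space M\<close> by (simp add: g_def)
    qed
  qed
  also have "\<dots> = (\<integral>\<^sup>+t. \<integral>\<^sup>+x. g x t \<partial>M \<partial>lborel)"
    by (rule Fubini'[symmetric]) (simp add: g_def case_prod_beta)
  also have "\<dots> = (\<integral>\<^sup>+t\<in>{0..}. emeasure M {x \<in> space M. t < f x} \<partial>lborel)"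
  proof (rule nn_integral_cong)
    fix t :: real
    have "(\<integral>\<^sup>+x. g x t \<partial>M) = (\<integral>\<^sup>+x. indicator {0..} t * indicator {x \<in> space M. t < f x} x \<partial>M)"
      by (rule nn_integral_cong) (simp add: g_def split: split_indicator)
    then show "(\<integral>\<^sup>+x. g x t \<partial>M) = emeasure M {x \<in> space M. t < f x} * indicator {0..} t"
      by (simp add: nn_integral_cmult_indicator mult.commute)
  qed
  finally show ?thesis .
qed

lemma has_integral_mult_sqrt_power:
  fixes c d :: real
  assumes "0 \<le> c" "c \<le> d"
  shows "((\<lambda>t. t * sqrt (t^2 - c^2)^m) has_integral sqrt (d^2 - c^2)^(m+2) / (m+2)) {c..d}"
proof -
  define F where "F t = sqrt (t^2 - c^2)^(m+2) / (m+2)" for t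
  have "((\<lambda>t. t * sqrt (t^2 - c^2)^m) has_integral F d - F c) {c..d}"
  proof (rule fundamental_theorem_of_calculus_interior)
    show "continuous_on {c..d} F" unfolding F_def by (intro continuous_intros) auto
    fix t assume t: "t \<in> {c<..<d}"
    have "c^2 < t^2" using assms t by (intro power_strict_mono) auto
    have "((\<lambda>t. t^2 - c^2) has_real_derivative 2*t) (at t)"
      by (auto intro!: derivative_eq_intros)
    from DERIV_chain2[OF DERIV_real_sqrt this] \<open>c^2 < t^2\<close>
    have "((\<lambda>t. sqrt (t^2 - c^2)) has_real_derivative t / sqrt (t^2 - c^2)) (at t)"
      by (simp add: field_simps)
    from DERIV_power_Suc[OF this, of "m+1"]
    have "((\<lambda>t. sqrt (t^2 - c^2)^(m+2)) has_real_derivative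
            (m+2) * (t / sqrt (t^2 - c^2) * sqrt (t^2 - c^2)^(m+1))) (at t)"
      by (simp add: algebra_simps)
    then have "(F has_real_derivative
                 (m+2) * (t / sqrt (t^2 - c^2) * sqrt (t^2 - c^2)^(m+1)) / (m+2)) (at t)"
      unfolding F_def by (rule DERIV_cdivide)
    also have "(m+2) * (t / sqrt (t^2 - c^2) * sqrt (t^2 - c^2)^(m+1)) / (m+2)
                 = t * sqrt (t^2 - c^2)^m"
      using \<open>c^2 < t^2\<close> by simp
    finally show "(F has_vector_derivative t * sqrt (t^2 - c^2)^m) (at t)"
      by (simp add: has_real_derivative_iff_has_vector_derivative)
  qed (use assms in auto)
  then show ?thesis by (simp add: F_def)
qed

text \<open>The planar focal property of the ellipse with foci \<open>(\<plusminus>a, 0)\<close>, major axis \<open>t\<close> and minor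
  axis \<open>sqrt (t\<^sup>2 - 4a\<^sup>2)\<close>, where \<open>r\<close> plays the role of the squared distance from the axis.
  With \<open>A = t/2 - 2au/t\<close> and \<open>B = t/2 + 2au/t\<close>, both \<open>A\<^sup>2 - p\<^sup>2\<close> and \<open>B\<^sup>2 - q\<^sup>2\<close> equal
  \<open>(t\<^sup>2 - 4a\<^sup>2)/4\<close> times the slack of the ellipse inequality, and \<open>A + B = t\<close>.\<close>
lemma focal_sum_le_iff:
  fixes a t u r :: real
  assumes a: "a > 0" and t: "t > 2*a" and r: "r \<ge> 0"
  shows "sqrt ((u-a)^2 + r) + sqrt ((u+a)^2 + r) \<le> t \<longleftrightarrow>
         4*u^2/t^2 + 4*r/(t^2 - 4*a^2) \<le> 1"
proof -
  define p where "p = sqrt ((u-a)^2 + r)"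
  define q where "q = sqrt ((u+a)^2 + r)"
  define A where "A = t/2 - 2*a*u/t"
  define B where "B = t/2 + 2*a*u/t"
  define S where "S = 1 - (4*u^2/t^2 + 4*r/(t^2 - 4*a^2))"
  have "(2*a)^2 < t^2" using a t by (intro power_strict_mono) auto
  hence tp: "t > 0" "t^2 - 4*a^2 > 0" using a t by (auto simp: power_mult_distrib)
  have p2: "p^2 = (u-a)^2 + r" and q2: "q^2 = (u+a)^2 + r" and pq: "p \<ge> 0" "q \<ge> 0"
    using r by (simp_all add: p_def q_def add_nonneg_nonneg)
  have eqA: "A^2 - p^2 = (t^2 - 4*a^2)/4 * S"
    using tp unfolding A_def S_def p2 by (simp add: field_simps power2_eq_square)
  have eqB: "B^2 - q^2 = (t^2 - 4*a^2)/4 * S"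
    using tp unfolding B_def S_def q2 by (simp add: field_simps power2_eq_square)
  have AB: "A + B = t" by (simp add: A_def B_def)
  show ?thesis
  proof
    assume h: "sqrt ((u-a)^2 + r) + sqrt ((u+a)^2 + r) \<le> t"
    show "4*u^2/t^2 + 4*r/(t^2 - 4*a^2) \<le> 1"
    proof (rule ccontr)
      assume "\<not> ?thesis"
      hence "(t^2 - 4*a^2)/4 * S < 0" using tp(2) by (intro mult_pos_neg) (auto simp: S_def)
      hence "A < p" and "B < q"
        using eqA eqB pq by (auto intro: power_less_imp_less_base[of _ 2])
      thus False using h AB unfolding p_def q_def by linarith
    qed
  next
    assume h: "4*u^2/t^2 + 4*r/(t^2 - 4*a^2) \<le> 1"
    have "4*r/(t^2 - 4*a^2) \<ge> 0" using r tp by simp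
    hence "4*u^2/t^2 \<le> 1" using h by linarith
    hence "u^2 \<le> (t/2)^2" using tp by (simp add: field_simps power2_eq_square)
    hence "\<bar>u\<bar> \<le> t/2" using tp by (metis abs_le_square_iff abs_of_pos half_gt_zero)
    hence "\<bar>2*a*u/t\<bar> \<le> a" using a tp by (simp add: abs_mult divide_le_eq)
    hence "-a \<le> 2*a*u/t" "2*a*u/t \<le> a" by linarith+
    hence "A \<ge> 0" "B \<ge> 0" using t unfolding A_def B_def by linarith+
    moreover have "(t^2 - 4*a^2)/4 * S \<ge> 0" using h tp(2) by (simp add: S_def)
    ultimately have "p \<le> A" and "q \<le> B"
      using eqA eqB by (auto intro: power2_le_imp_le)
    thus "sqrt ((u-a)^2 + r) + sqrt ((u+a)^2 + r) \<le> t" using AB unfolding p_def q_def by linarith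
  qed
qed

lemma norm_diff_axis_power2:
  fixes x :: "real^'n"
  shows "norm (x - (\<chi> i. if i = k then c else 0))^2 = (x$k - c)^2 + (\<Sum>i\<in>-{k}. (x$i)^2)"
proof -
  have "norm (x - (\<chi> i. if i = k then c else 0))^2
          = (\<Sum>i\<in>UNIV. ((x - (\<chi> i. if i = k then c else 0))$i)^2)"
    unfolding power2_norm_eq_inner inner_vec_def by (simp add: power2_eq_square)
  also have "\<dots> = (x$k - c)^2 + (\<Sum>i\<in>-{k}. (x$i)^2)"
    by (simp add: sum.remove[of UNIV k] Compl_eq_Diff_UNIV)
  finally show ?thesis .
qed

lemma transverse_diam_eq:
  "transverse_diam a k x = sqrt ((x$k - a)^2 + (\<Sum>i\<in>-{k}. (x$i)^2)) + sqrt ((x$k + a)^2 + (\<Sum>i\<in>-{k}. (x$i)^2))"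
  using norm_diff_axis_power2[of x k a] norm_diff_axis_power2[of x k "-a"]
  unfolding transverse_diam_def focus_plus_def focus_minus_def
  by (metis diff_minus_eq_add norm_ge_zero real_sqrt_unique)

lemma transverse_diam_nonneg: "0 \<le> transverse_diam a k x"
  by (simp add: transverse_diam_def)

lemma transverse_diam_ge: "2 * \<bar>a\<bar> \<le> transverse_diam a k x"
proof -
  have "focus_plus a k - focus_minus a k = (2*a) *\<^sub>R axis k 1"
    by (simp add: vec_eq_iff focus_minus_def focus_plus_def axis_def)
  then have "norm (focus_plus a k - focus_minus a k) = 2 * \<bar>a\<bar>"
    by simp
  moreover have "norm (focus_plus a k - focus_minus a k) \<le> transverse_diam a k x"
    unfolding transverse_diam_def
    by (metis norm_minus_commute norm_triangle_ineq diff_add_cancel add.commute diff_diff_eq2 norm_triangle_sub)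
  ultimately show ?thesis by simp
qed

lemma borel_measurable_transverse_diam [measurable]: "transverse_diam a k \<in> borel_measurable borel"
  unfolding transverse_diam_def by measurable

lemma hyperspheroid_borel [measurable]: "hyperspheroid a k t \<in> sets borel"
  unfolding hyperspheroid_def by measurable

lemma bounded_hyperspheroid: "bounded (hyperspheroid a k t)"
proof -
  have "hyperspheroid a k t \<subseteq> cball 0 (t/2)"
  proof
    fix x assume "x \<in> hyperspheroid a k t"
    moreover have "2 *\<^sub>R x = (x - focus_plus a k) + (x - focus_minus a k)"
      by (simp add: vec_eq_iff focus_plus_def focus_minus_def)
    then have "2 * norm x \<le> transverse_diam a k x"
      unfolding transverse_diam_def by (metis norm_scaleR norm_triangle_ineq abs_numeral)
    ultimately show "x \<in> cball 0 (t/2)" by (simp add: hyperspheroid_def)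
  qed
  thus ?thesis by (rule bounded_subset[OF bounded_cball])
qed

definition semi_axis :: "real \<Rightarrow> real \<Rightarrow> 'n \<Rightarrow> 'n \<Rightarrow> real" where
  "semi_axis a t k i = (if i = k then t/2 else sqrt (t^2 - 4*a^2)/2)"

lemma hyperspheroid_eq_stretch_cball:
  fixes k :: "'n::finite"
  assumes a: "a > 0" and t: "t > 2*a"
  shows "hyperspheroid a k t = (\<lambda>y. \<chi> i. semi_axis a t k i * y$i) ` cball 0 1"
proof -
  have "(2*a)^2 < t^2" using a t by (intro power_strict_mono) auto
  hence tp: "t > 0" "t^2 - 4*a^2 > 0" using a t by (auto simp: power_mult_distrib)
  have pos: "semi_axis a t k i > 0" for i using tp by (simp add: semi_axis_def)
  have sq: "(semi_axis a t k i)^2 = (if i = k then t^2/4 else (t^2 - 4*a^2)/4)" for i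
    using tp by (simp add: semi_axis_def power_divide)
  have "x \<in> hyperspheroid a k t \<longleftrightarrow> x \<in> (\<lambda>y. \<chi> i. semi_axis a t k i * y$i) ` cball 0 1" for x
  proof -
    define r where "r = (\<Sum>i\<in>-{k}. (x$i)^2)"
    define y where "y = (\<chi> i. x$i / semi_axis a t k i)"
    have "norm y ^ 2 = (y$k)^2 + (\<Sum>i\<in>-{k}. (y$i)^2)"
      using norm_diff_axis_power2[of y k 0] by (simp add: zero_vec_def[symmetric])
    also have "(\<Sum>i\<in>-{k}. (y$i)^2) = (\<Sum>i\<in>-{k}. 4 * (x$i)^2 / (t^2 - 4*a^2))"
      by (rule sum.cong) (auto simp: y_def power_divide sq)
    finally have y2: "norm y ^ 2 = 4*(x$k)^2/t^2 + 4*r/(t^2 - 4*a^2)"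
      by (simp add: y_def power_divide sq r_def sum_divide_distrib sum_distrib_left)
    have x_eq: "x = (\<chi> i. semi_axis a t k i * z$i) \<longleftrightarrow> z = y" for z
      using pos[THEN less_imp_neq] by (auto simp: vec_eq_iff y_def field_simps)
    have "x \<in> hyperspheroid a k t \<longleftrightarrow> 4*(x$k)^2/t^2 + 4*r/(t^2 - 4*a^2) \<le> 1"
      unfolding hyperspheroid_def mem_Collect_eq transverse_diam_eq r_def[symmetric]
      by (rule focal_sum_le_iff[OF a t]) (simp add: r_def sum_nonneg)
    also have "\<dots> \<longleftrightarrow> y \<in> cball 0 1" by (simp add: y2[symmetric] power_le_one_iff)
    also have "\<dots> \<longleftrightarrow> x \<in> (\<lambda>y. \<chi> i. semi_axis a t k i * y$i) ` cball 0 1"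
      using x_eq by (auto simp: image_iff)
    finally show ?thesis .
  qed
  thus ?thesis by blast
qed

text \<open>The volume \<open>\<zeta>\<^sub>n t (t\<^sup>2 - c\<^sup>2)\<^bsup>(n-1)/2\<^esup> / 2\<^sup>n\<close> of \<open>E(t)\<close> for \<open>c = d\<^sub>m\<^sub>i\<^sub>n\<close>, written as \<open>\<zeta>\<^sub>n\<close> times
  the product of the semi-axes, and set to \<open>0\<close> where \<open>E(t)\<close> is degenerate.\<close>
definition hyperspheroid_volume :: "nat \<Rightarrow> real \<Rightarrow> real \<Rightarrow> real" where
  "hyperspheroid_volume n c t =
     (if t \<le> c then 0 else unit_ball_vol n * (t/2) * (sqrt (t^2 - c^2)/2)^(n - 1))"

lemma hyperspheroid_volume_pos: "0 \<le> c \<Longrightarrow> c < t \<Longrightarrow> 0 < hyperspheroid_volume n c t"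
  by (simp add: hyperspheroid_volume_def power_strict_mono)

lemma hyperspheroid_volume_nonneg: "0 \<le> c \<Longrightarrow> 0 \<le> hyperspheroid_volume n c t"
  using hyperspheroid_volume_pos[of c t n] by (cases "t \<le> c") (auto simp: hyperspheroid_volume_def)

lemma hyperspheroid_volume_mono:
  assumes c: "0 \<le> c" and "t \<le> d"
  shows "hyperspheroid_volume n c t \<le> hyperspheroid_volume n c d"
proof (cases "t \<le> c")
  case True
  then show ?thesis using hyperspheroid_volume_nonneg[OF c] by (simp add: hyperspheroid_volume_def)
next
  case False
  have "c^2 \<le> t^2" "t^2 \<le> d^2" using False c \<open>t \<le> d\<close> by (auto intro: power_mono)
  then have "(sqrt (t^2 - c^2)/2)^(n - 1) \<le> (sqrt (d^2 - c^2)/2)^(n - 1)"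
    by (intro power_mono divide_right_mono) auto
  then have "unit_ball_vol n * (t/2) * (sqrt (t^2 - c^2)/2)^(n - 1)
               \<le> unit_ball_vol n * (d/2) * (sqrt (d^2 - c^2)/2)^(n - 1)"
    using False c \<open>t \<le> d\<close> by (intro mult_mono) auto
  then show ?thesis using False \<open>t \<le> d\<close> by (simp add: hyperspheroid_volume_def)
qed

lemma emeasure_hyperspheroid:
  fixes k :: "'n::finite"
  assumes a: "a > 0" and t: "t \<noteq> 2*a"
  shows "emeasure lborel (hyperspheroid a k t) = ennreal (hyperspheroid_volume CARD('n) (2*a) t)"
proof (cases "t < 2*a")
  case True
  then have "t < transverse_diam a k x" for x
    using transverse_diam_ge[of a k x] a by simp
  then have "hyperspheroid a k t = {}"
    by (auto simp: hyperspheroid_def not_le)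
  with True show ?thesis by (simp add: hyperspheroid_volume_def)
next
  case False
  with t have t: "t > 2*a" by simp
  have "prod (semi_axis a t k) UNIV = semi_axis a t k k * prod (semi_axis a t k) (-{k})"
    by (simp add: prod.remove[of UNIV k] Compl_eq_Diff_UNIV)
  also have "\<dots> = (t/2) * (sqrt (t^2 - (2*a)^2)/2)^(CARD('n) - 1)"
    by (simp add: semi_axis_def Compl_eq_Diff_UNIV card_Diff_singleton power_mult_distrib)
  finally have prod: "prod (semi_axis a t k) UNIV = (t/2) * (sqrt (t^2 - (2*a)^2)/2)^(CARD('n) - 1)" .
  have "(2*a)^2 \<le> t^2" using a t by (intro power_mono) auto
  have ball: "measure lebesgue (cball (0::real^'n) 1) = unit_ball_vol CARD('n)"
    using emeasure_cball[of 1 "0::real^'n"] by (simp add: measure_def)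
  have "measure lebesgue (hyperspheroid a k t)
          = \<bar>prod (semi_axis a t k) UNIV\<bar> * measure lebesgue (cball (0::real^'n) 1)"
    unfolding hyperspheroid_eq_stretch_cball[OF a t] by (rule measure_stretch) simp
  also have "\<dots> = hyperspheroid_volume CARD('n) (2*a) t"
    unfolding prod ball using t a \<open>(2*a)^2 \<le> t^2\<close> by (simp add: hyperspheroid_volume_def abs_mult)
  finally show ?thesis
    using emeasure_bounded_finite[OF bounded_hyperspheroid, of a k t]
    by (simp add: emeasure_eq_ennreal_measure less_top)
qed

lemma has_integral_hyperspheroid_volume:
  assumes n: "n \<ge> 1" and c: "0 \<le> c" "c \<le> d"
  shows "(hyperspheroid_volume n c has_integral
           unit_ball_vol n / 2^n * sqrt (d^2 - c^2)^(n+1) / (n+1)) {0..d}"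
proof -
  have "(hyperspheroid_volume n c has_integral 0) {0..c}"
    by (rule has_integral_spike_finite[of "{}", OF _ _ has_integral_0])
       (auto simp: hyperspheroid_volume_def)
  moreover have "(hyperspheroid_volume n c has_integral
                    unit_ball_vol n / 2^n * sqrt (d^2 - c^2)^(n+1) / (n+1)) {c..d}"
  proof (rule has_integral_spike_finite[of "{c}"])
    show "((\<lambda>t. unit_ball_vol n / 2^n * (t * sqrt (t^2 - c^2)^(n-1))) has_integral
             unit_ball_vol n / 2^n * sqrt (d^2 - c^2)^(n+1) / (n+1)) {c..d}"
      using has_integral_mult_right[OF has_integral_mult_sqrt_power[OF c, of "n - 1"],
              of "unit_ball_vol n / 2^n"] n
      by (simp add: add.commute)
    fix t assume "t \<in> {c..d} - {c}"
    moreover have "(2::real)^n = 2 * 2^(n-1)" using n by (simp flip: power_Suc)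
    ultimately show "hyperspheroid_volume n c t = unit_ball_vol n / 2^n * (t * sqrt (t^2 - c^2)^(n-1))"
      by (simp add: hyperspheroid_volume_def power_divide)
  qed simp
  ultimately show ?thesis
    using c by (intro has_integral_combine[of 0 c d, where i=0, simplified]) auto
qed

lemma has_integral_hyperspheroid_volume_ratio:
  assumes n: "n \<ge> 1" and c: "0 \<le> c" "c < d"
  shows "((\<lambda>t. 1 - hyperspheroid_volume n c t / hyperspheroid_volume n c d) has_integral
           (n * d^2 + c^2) / ((n+1) * d)) {0..d}"
proof -
  define \<beta> where "\<beta> = sqrt (d^2 - c^2)"
  have "c^2 < d^2" using c by (intro power_strict_mono) auto
  then have \<beta>: "\<beta> > 0" "\<beta>^2 = d^2 - c^2" by (simp_all add: \<beta>_def)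
  have d: "d > 0" using c by simp
  have pow: "\<beta>^(n+1) = \<beta>^2 * \<beta>^(n-1)" "(2::real)^n = 2 * 2^(n-1)"
    using n by (simp_all flip: power_add power_Suc)
  define K where "K = unit_ball_vol n / 2^n * \<beta>^(n-1)"
  have K: "K > 0" using \<beta> by (simp add: K_def)
  have "hyperspheroid_volume n c d = K * d"
    using c by (simp add: hyperspheroid_volume_def K_def \<beta>_def[symmetric] pow(2) power_divide)
  moreover have "unit_ball_vol n / 2^n * \<beta>^(n+1) / (n+1) = K * (\<beta>^2 / (n+1))"
    unfolding K_def pow(1) by (simp add: mult_ac)
  ultimately have "unit_ball_vol n / 2^n * \<beta>^(n+1) / (n+1) / hyperspheroid_volume n c d
                     = \<beta>^2 / ((n+1) * d)"
    using K by simp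
  moreover have "(n+1) * d > 0" using d by simp
  then have "d - \<beta>^2 / ((n+1) * d) = (n * d^2 + c^2) / ((n+1) * d)"
    unfolding \<beta>(2) by (simp add: field_simps power2_eq_square)
  ultimately show ?thesis
    using has_integral_diff[OF has_integral_const_real[of 1 0 d]
            has_integral_divide[OF has_integral_hyperspheroid_volume[OF n c(1) less_imp_le[OF c(2)]],
              of "hyperspheroid_volume n c d"]] c
    by (simp add: \<beta>_def add.commute)
qed

text \<open>For \<open>t > d\<close> the right-hand side is \<open>ennreal\<close> of a non-positive number, i.e. \<open>0\<close>.\<close>
lemma emeasure_uniform_hyperspheroid_less_transverse_diam:
  fixes k :: "'n::finite"
  assumes a: "a > 0" and d: "2*a < d" and t: "t \<noteq> 2*a"
  shows "emeasure (uniform_measure lborel (hyperspheroid a k d)) {x. t < transverse_diam a k x}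
           = ennreal (1 - hyperspheroid_volume CARD('n) (2*a) t / hyperspheroid_volume CARD('n) (2*a) d)"
proof -
  let ?V = "hyperspheroid_volume CARD('n) (2*a)"
  have Vd: "?V d > 0" using a d by (intro hyperspheroid_volume_pos) auto
  have E_d: "emeasure lborel (hyperspheroid a k d) = ennreal (?V d)"
    using d by (intro emeasure_hyperspheroid[OF a]) simp
  have "emeasure (uniform_measure lborel (hyperspheroid a k d)) {x. t < transverse_diam a k x}
          = emeasure lborel (hyperspheroid a k d - hyperspheroid a k t) / ennreal (?V d)"
  proof -
    have "hyperspheroid a k d \<inter> {x. t < transverse_diam a k x} = hyperspheroid a k d - hyperspheroid a k t"
      by (auto simp: hyperspheroid_def)
    then show ?thesis by (simp add: emeasure_uniform_measure E_d)
  qed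
  also have "\<dots> = ennreal (1 - ?V t / ?V d)"
  proof (cases "t \<le> d")
    case True
    have "hyperspheroid a k t \<subseteq> hyperspheroid a k d"
      using True by (auto simp: hyperspheroid_def)
    then have "emeasure lborel (hyperspheroid a k d - hyperspheroid a k t) = ennreal (?V d - ?V t)"
      using a by (simp add: emeasure_Diff E_d emeasure_hyperspheroid[OF a t] ennreal_minus
                    hyperspheroid_volume_nonneg)
    moreover have "?V t \<le> ?V d" using True a by (intro hyperspheroid_volume_mono) auto
    ultimately show ?thesis
      using Vd by (simp add: divide_ennreal diff_divide_distrib)
  next
    case False
    then have "hyperspheroid a k d - hyperspheroid a k t = {}"
      by (auto simp: hyperspheroid_def)
    then have "emeasure lborel (hyperspheroid a k d - hyperspheroid a k t) = 0"
      by (simp only: emeasure_empty)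
    moreover have "?V d \<le> ?V t" using False a by (intro hyperspheroid_volume_mono) auto
    ultimately show ?thesis using Vd by (simp add: ennreal_neg)
  qed
  finally show ?thesis .
qed

lemma nn_integral_transverse_diam_uniform_hyperspheroid:
  fixes a d :: real and k :: "'n::finite"
  assumes a: "a > 0" and d: "2*a < d"
  shows "(\<integral>\<^sup>+x. ennreal (transverse_diam a k x) \<partial>uniform_measure lborel (hyperspheroid a k d))
           = ennreal ((real CARD('n) * d^2 + (2*a)^2) / ((real CARD('n) + 1) * d))"
proof -
  let ?U = "uniform_measure lborel (hyperspheroid a k d)"
  let ?V = "hyperspheroid_volume CARD('n) (2*a)"
  have Vd: "?V d > 0" using a d by (intro hyperspheroid_volume_pos) auto
  have "prob_space ?U"
    using Vd d by (intro prob_space_uniform_measure) (simp_all add: emeasure_hyperspheroid[OF a])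
  then have "(\<integral>\<^sup>+x. ennreal (transverse_diam a k x) \<partial>?U)
               = (\<integral>\<^sup>+t\<in>{0..}. emeasure ?U {x \<in> space ?U. t < transverse_diam a k x} \<partial>lborel)"
    by (intro nn_integral_layer_cake prob_space_imp_sigma_finite) (simp_all add: transverse_diam_nonneg)
  also have "\<dots> = (\<integral>\<^sup>+t. ennreal (1 - ?V t / ?V d) * indicator {0..d} t \<partial>lborel)"
  proof (rule nn_integral_cong_AE)
    show "AE t in lborel. emeasure ?U {x \<in> space ?U. t < transverse_diam a k x} * indicator {0..} t
                            = ennreal (1 - ?V t / ?V d) * indicator {0..d} t"
      using AE_lborel_singleton[of "2*a"]
    proof eventually_elim
      fix t assume "t \<noteq> 2*a"
      then have "emeasure ?U {x \<in> space ?U. t < transverse_diam a k x} = ennreal (1 - ?V t / ?V d)"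
        using emeasure_uniform_hyperspheroid_less_transverse_diam[OF a d] by simp
      moreover have "ennreal (1 - ?V t / ?V d) = 0" if "d < t"
        using hyperspheroid_volume_mono[of "2*a" d t] that a Vd by (simp add: ennreal_neg)
      ultimately show "emeasure ?U {x \<in> space ?U. t < transverse_diam a k x} * indicator {0..} t
                         = ennreal (1 - ?V t / ?V d) * indicator {0..d} t"
        by (auto simp: indicator_def not_le simp del: emeasure_uniform_measure)
    qed
  qed
  also have "\<dots> = ennreal ((real CARD('n) * d^2 + (2*a)^2) / ((real CARD('n) + 1) * d))"
  proof (rule nn_integral_has_integral_lebesgue')
    show "0 \<le> 1 - ?V t / ?V d" if "t \<in> {0..d}" for t
      using hyperspheroid_volume_mono[of "2*a" t d] that a Vd by simp
  qed (use has_integral_hyperspheroid_volume_ratio[of "CARD('n)" "2*a" d] a d in simp)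
  finally show ?thesis .
qed

theorem mainTheorem1:
  fixes a d :: real and k :: "'n::finite"
  assumes "CARD('n) \<ge> 2" and "a > 0" and "d > 2 * a"
  shows "(\<integral>x. transverse_diam a k x \<partial>(uniform_measure lborel (hyperspheroid a k d)))
           = (real CARD('n) * d^2 + (2 * a)^2) / ((real CARD('n) + 1) * d)"
proof -
  have "0 \<le> (real CARD('n) * d^2 + (2 * a)^2) / ((real CARD('n) + 1) * d)"
    using assms by simp
  then show ?thesis
    using nn_integral_transverse_diam_uniform_hyperspheroid[OF \<open>a > 0\<close> \<open>d > 2 * a\<close>, of k]
    by (simp add: integral_eq_nn_integral transverse_diam_nonneg)
qed
end
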